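(* Let $X$ be a Tychonoff space. Then $C_p(X,\mathbb R)$ is STAP if and only if $X$ is finite.
   Context: $C_p(X,\mathbb R)$ is the additive group of all continuous functions $X\to\mathbb R$ with the topology of pointwise convergence; its neutral element is the zero function. A sequence $(f_n)$ in an abelian topological group is hyper-converging if $m_nf_n\to 0$ for every integer sequence $(m_n)$. A group is STAP if no sequence of pairwise distinct elements is hyper-converging. *)

theory Defs
  imports "HOL-Analysis.Analysis"
begin

definition Tychonoff_space :: "'a topology \<Rightarrow> bool" where
  "Tychonoff_space X \<longleftrightarrow> completely_regular_space X \<and> Hausdorff_space X"

text \<open>Carrier of C_p(X,R): continuous real functions on topspace X,
  represented extensionally (value undefined outside topspace X), as points of
  the product space R^(topspace X).\<close>
definition Cp :: "'a topology \<Rightarrow> ('a \<Rightarrow> real) set" where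
  "Cp X = {f. continuous_map X euclideanreal f \<and> f \<in> extensional (topspace X)}"

definition Cp_top :: "'a topology \<Rightarrow> ('a \<Rightarrow> real) topology" where
  "Cp_top X = subtopology (product_topology (\<lambda>_. euclideanreal) (topspace X)) (Cp X)"

definition Cp_zero :: "'a topology \<Rightarrow> 'a \<Rightarrow> real" where
  "Cp_zero X = restrict (\<lambda>_. 0) (topspace X)"

definition Cp_intmult :: "'a topology \<Rightarrow> int \<Rightarrow> ('a \<Rightarrow> real) \<Rightarrow> 'a \<Rightarrow> real" where
  "Cp_intmult X k f = restrict (\<lambda>x. of_int k * f x) (topspace X)"

definition Cp_hyper_converging :: "'a topology \<Rightarrow> (nat \<Rightarrow> 'a \<Rightarrow> real) \<Rightarrow> bool" where
  "Cp_hyper_converging X f \<longleftrightarrow> (\<forall>n. f n \<in> Cp X) \<and>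
     (\<forall>m :: nat \<Rightarrow> int. limitin (Cp_top X) (\<lambda>n. Cp_intmult X (m n) (f n)) (Cp_zero X) sequentially)"

definition Cp_STAP :: "'a topology \<Rightarrow> bool" where
  "Cp_STAP X \<longleftrightarrow> \<not> (\<exists>f. inj f \<and> Cp_hyper_converging X f)"

end

theory Submission
  imports Defs
begin

(* Both directions rest on one observation: since C_p(X,R) carries the topology of
   pointwise convergence, a sequence (f n) is hyper-converging iff m n * f n x -> 0 for
   every integer sequence m and every point x (lemma Cp_hyper_converging_iff).

   Infinite X: an infinite Hausdorff space contains a sequence of pairwise disjoint
   nonempty open sets U n; complete regularity gives continuous bumps f n with f n = 1 at
   a point of U n and f n = 0 off U n.  Every point meets at most one U n, so each
   sequence m n * f n x is eventually 0: (f n) is an injective hyper-converging sequence.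

   Finite X: an injective sequence is eventually nonzero; scaling f n by an integer so that
   its l1-norm over the finite set X is at least 1 contradicts pointwise convergence to 0,
   because the l1-norm is a finite sum of the pointwise values. *)

text \<open>Separate two of its points a, b by disjoint open A, B:
  either W \<inter> A is infinite, or it is a finite open neighbourhood of a, so that a is
  isolated in the T1 space X.\<close>
lemma Hausdorff_split_infinite_open:
  assumes H: "Hausdorff_space X" and W: "openin X W" and inf: "infinite W"
  shows "\<exists>U W'. openin X U \<and> U \<noteq> {} \<and> openin X W' \<and> infinite W' \<and>
                U \<inter> W' = {} \<and> U \<subseteq> W \<and> W' \<subseteq> W"
proof -
  have t1: "t1_space X" using H Hausdorff_imp_t1_space by blast
  have Wsub: "W \<subseteq> topspace X" using W openin_subset by blast
  obtain a where a: "a \<in> W" using inf infinite_imp_nonempty by blast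
  have "W - {a} \<noteq> {}"
    using inf by (metis Diff_eq_empty_iff finite.emptyI finite_insert finite_subset)
  then obtain b where "b \<in> W - {a}" by blast
  then have ab: "a \<in> W" "b \<in> W" "a \<noteq> b" using a by auto
  obtain A B where AB: "openin X A" "openin X B" "a \<in> A" "b \<in> B" "disjnt A B"
  proof -
    have "a \<in> topspace X" "b \<in> topspace X" using ab Wsub by auto
    then show ?thesis using H ab(3) that unfolding Hausdorff_space_def by blast
  qed
  show ?thesis
  proof (cases "finite (W \<inter> A)")
    case False
    then show ?thesis
      using AB W ab by (intro exI[of _ "W \<inter> B"] exI[of _ "W \<inter> A"]) (auto simp: disjnt_def)
  next
    case True
    have "closedin X (W \<inter> A - {a})"
      using t1_space_closedin_finite[THEN iffD1, OF t1] True Wsub by auto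
    then have "openin X ((W \<inter> A) - (W \<inter> A - {a}))"
      using W AB by (intro openin_diff openin_Int) auto
    moreover have "(W \<inter> A) - (W \<inter> A - {a}) = {a}" using ab AB by auto
    ultimately have "openin X {a}" by simp
    moreover have "openin X (W - {a})" using t1_space_openin_delete[THEN iffD1, OF t1] W ab by blast
    ultimately show ?thesis
      using inf ab by (intro exI[of _ "{a}"] exI[of _ "W - {a}"]) auto
  qed
qed

text \<open>Hence an infinite Hausdorff space has an infinite cellular family: iterate the
  splitting on the decreasing infinite remainders and keep the split-off pieces.\<close>
lemma Hausdorff_infinite_disjoint_open_sequence:
  assumes H: "Hausdorff_space X" and inf: "infinite (topspace X)"
  obtains U :: "nat \<Rightarrow> 'a set"
  where "\<And>n. openin X (U n)" "\<And>n. U n \<noteq> {}" "\<And>m n. m \<noteq> n \<Longrightarrow> U m \<inter> U n = {}"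
proof -
  have "\<exists>U W'. openin X W \<and> infinite W \<longrightarrow>
       openin X U \<and> U \<noteq> {} \<and> openin X W' \<and> infinite W' \<and> U \<inter> W' = {} \<and> U \<subseteq> W \<and> W' \<subseteq> W"
    for W
  proof (cases "openin X W \<and> infinite W")
    case True
    then show ?thesis using Hausdorff_split_infinite_open[OF H, of W] by simp
  qed auto
  then obtain piece rest where split_all: "\<forall>W. openin X W \<and> infinite W \<longrightarrow>
       openin X (piece W) \<and> piece W \<noteq> {} \<and> openin X (rest W) \<and> infinite (rest W) \<and>
       piece W \<inter> rest W = {} \<and> piece W \<subseteq> W \<and> rest W \<subseteq> W"
    by metis
  note split = split_all[rule_format, OF conjI]
  define R where "R = rec_nat (topspace X) (\<lambda>_. rest)"
  have R_simps: "R 0 = topspace X" "R (Suc n) = rest (R n)" for n by (simp_all add: R_def)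
  have R_inv: "openin X (R n) \<and> infinite (R n)" for n
    by (induction n) (use inf split in \<open>auto simp: R_simps\<close>)
  have R_step: "openin X (piece (R n)) \<and> piece (R n) \<noteq> {} \<and>
      piece (R n) \<inter> R (Suc n) = {} \<and> piece (R n) \<subseteq> R n \<and> R (Suc n) \<subseteq> R n" for n
    using split[of "R n"] R_inv[of n] by (simp add: R_simps)
  have R_antimono: "R m \<subseteq> R n" if "n \<le> m" for m n
    using that by (induction m) (use R_step le_Suc_eq in blast)+
  have "piece (R m) \<inter> piece (R n) = {}" if "n < m" for m n
  proof -
    have "piece (R m) \<subseteq> R (Suc n)" using R_step[of m] R_antimono[of "Suc n" m] that by auto
    then show ?thesis using R_step[of n] by auto
  qed
  then show ?thesis
    using that[of "\<lambda>n. piece (R n)"] R_step by (metis Int_commute linorder_neqE_nat)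
qed

lemma Cp_intmult_in: "f \<in> Cp X \<Longrightarrow> Cp_intmult X k f \<in> Cp X"
  unfolding Cp_def Cp_intmult_def
  by (auto intro!: continuous_map_real_mult_left continuous_map_eq[of X euclideanreal "\<lambda>x. of_int k * f x"])

lemma Cp_zero_in: "Cp_zero X \<in> Cp X"
  unfolding Cp_def Cp_zero_def
  by (auto intro!: continuous_map_eq[of X euclideanreal "\<lambda>x. 0"])

lemma limitin_Cp_zero_iff:
  assumes "\<And>n. g n \<in> Cp X"
  shows "limitin (Cp_top X) g (Cp_zero X) sequentially \<longleftrightarrow>
         (\<forall>x\<in>topspace X. ((\<lambda>n. g n x) \<longlongrightarrow> 0) sequentially)"
proof -
  have "g n \<in> topspace (product_topology (\<lambda>_. euclideanreal) (topspace X))" for n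
    using assms[of n] by (simp add: Cp_def topspace_product_topology PiE_def)
  moreover have "Cp_zero X x = 0" if "x \<in> topspace X" for x
    using that by (simp add: Cp_zero_def)
  ultimately show ?thesis
    unfolding Cp_top_def limitin_subtopology limitin_componentwise
    using assms Cp_zero_in[of X] by (simp add: Cp_zero_def)
qed

lemma Cp_hyper_converging_iff:
  "Cp_hyper_converging X f \<longleftrightarrow> (\<forall>n. f n \<in> Cp X) \<and>
     (\<forall>m :: nat \<Rightarrow> int. \<forall>x\<in>topspace X. ((\<lambda>n. of_int (m n) * f n x) \<longlongrightarrow> 0) sequentially)"
proof -
  have "limitin (Cp_top X) (\<lambda>n. Cp_intmult X (m n) (f n)) (Cp_zero X) sequentially \<longleftrightarrow>
        (\<forall>x\<in>topspace X. ((\<lambda>n. of_int (m n) * f n x) \<longlongrightarrow> 0) sequentially)"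
    if "\<forall>n. f n \<in> Cp X" for m
  proof -
    have "Cp_intmult X (m n) (f n) \<in> Cp X" for n using that by (simp add: Cp_intmult_in)
    then show ?thesis by (simp only: limitin_Cp_zero_iff) (auto simp: Cp_intmult_def)
  qed
  then show ?thesis unfolding Cp_hyper_converging_def by blast
qed

lemma completely_regular_bump:
  assumes CR: "completely_regular_space X" and U: "openin X U" and x: "x \<in> U"
  obtains f where "f \<in> Cp X" "f x = 1" "\<And>y. y \<in> topspace X \<Longrightarrow> y \<notin> U \<Longrightarrow> f y = 0"
proof -
  have "U \<subseteq> topspace X" using U openin_subset by blast
  then have "closedin X (topspace X - U)" "x \<in> topspace X - (topspace X - U)"
    using U x by auto
  then obtain g :: "'a \<Rightarrow> real" where g: "continuous_map X (top_of_set {0..1}) g" "g x = 0"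
      "g ` (topspace X - U) \<subseteq> {1}"
    using CR unfolding completely_regular_space_def by blast
  define f where "f = restrict (\<lambda>y. 1 - g y) (topspace X)"
  have "continuous_map X euclideanreal (\<lambda>y. 1 - g y)"
    using g(1) by (intro continuous_map_diff) (auto simp: continuous_map_in_subtopology)
  then have "f \<in> Cp X"
    unfolding Cp_def f_def by (auto intro: continuous_map_eq)
  moreover have "f x = 1" using g(2) x \<open>U \<subseteq> topspace X\<close> by (auto simp: f_def)
  moreover have "f y = 0" if "y \<in> topspace X" "y \<notin> U" for y using g(3) that by (auto simp: f_def)
  ultimately show ?thesis using that by blast
qed

text \<open>Functions supported on pairwise disjoint sets form a hyper-converging sequence:
  at each point all but at most one of them vanish.\<close>
lemma disjoint_supports_hyper_converging:
  assumes Cp: "\<And>n. f n \<in> Cp X"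
    and supp: "\<And>n y. y \<in> topspace X \<Longrightarrow> y \<notin> U n \<Longrightarrow> f n y = 0"
    and disj: "\<And>m n. m \<noteq> n \<Longrightarrow> U m \<inter> U n = {}"
  shows "Cp_hyper_converging X f"
  unfolding Cp_hyper_converging_iff
proof (intro conjI allI ballI Cp)
  fix m :: "nat \<Rightarrow> int" and x assume "x \<in> topspace X"
  have "\<forall>\<^sub>F n in sequentially. f n x = 0"
  proof (cases "\<exists>k. x \<in> U k")
    case True
    then obtain k where "x \<in> U k" by blast
    then have "f n x = 0" if "n > k" for n using disj[of n k] supp[of x n] that \<open>x \<in> topspace X\<close> by auto
    with eventually_gt_at_top[of k] show ?thesis by (rule eventually_mono)
  qed (use supp \<open>x \<in> topspace X\<close> in auto)
  then show "((\<lambda>n. of_int (m n) * f n x) \<longlongrightarrow> 0) sequentially"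
    by (rule tendsto_eventually[OF eventually_mono]) simp
qed

lemma infinite_not_Cp_STAP:
  assumes T: "Tychonoff_space X" and inf: "infinite (topspace X)"
  shows "\<not> Cp_STAP X"
proof -
  have CR: "completely_regular_space X" and H: "Hausdorff_space X"
    using T by (auto simp: Tychonoff_space_def)
  obtain U :: "nat \<Rightarrow> 'a set" where U: "\<And>n. openin X (U n)" "\<And>n. U n \<noteq> {}"
    and disj: "\<And>m n. m \<noteq> n \<Longrightarrow> U m \<inter> U n = {}"
    using Hausdorff_infinite_disjoint_open_sequence[OF H inf] by blast
  have "\<forall>n. \<exists>y. y \<in> U n" using U(2) by blast
  then obtain x where x: "\<And>n. x n \<in> U n" by metis
  have "\<forall>n. \<exists>g. g \<in> Cp X \<and> g (x n) = 1 \<and> (\<forall>y\<in>topspace X. y \<notin> U n \<longrightarrow> g y = 0)"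
    using completely_regular_bump[OF CR U(1) x] by metis
  then obtain f where f: "\<And>n. f n \<in> Cp X" "\<And>n. f n (x n) = 1"
    "\<And>n y. y \<in> topspace X \<Longrightarrow> y \<notin> U n \<Longrightarrow> f n y = 0"
    by metis
  have "inj f"
  proof (rule injI, rule ccontr)
    fix m n assume "f m = f n" "m \<noteq> n"
    then have "f m (x n) = 1" using f(2) by simp
    moreover have "x n \<notin> U m" using disj[OF \<open>m \<noteq> n\<close>] x[of n] by auto
    moreover have "x n \<in> topspace X" using x[of n] U(1)[of n] openin_subset by blast
    ultimately show False using f(3) by simp
  qed
  moreover have "Cp_hyper_converging X f"
    using disjoint_supports_hyper_converging[OF f(1) f(3) disj] .
  ultimately show ?thesis unfolding Cp_STAP_def by blast
qed

lemma inj_eventually_neq: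
  assumes "inj f"
  shows "\<forall>\<^sub>F n in sequentially. f n \<noteq> z"
proof -
  have "finite {n. f n = z}"
    using finite_vimageI[OF finite.insertI[OF finite.emptyI] assms] by (simp add: vimage_def)
  then show ?thesis by (simp flip: cofinite_eq_sequentially add: eventually_cofinite)
qed

lemma integer_multiple_norm_ge_1:
  fixes g :: "'a \<Rightarrow> real"
  assumes T: "finite T" and nz: "x \<in> T" "g x \<noteq> 0"
  shows "\<exists>k :: int. (\<Sum>y\<in>T. \<bar>of_int k * g y\<bar>) \<ge> 1"
proof -
  define M where "M = (\<Sum>y\<in>T. \<bar>g y\<bar>)"
  have "\<bar>g x\<bar> \<le> M" unfolding M_def by (rule member_le_sum[OF nz(1)]) (use T in auto)
  then have M: "M > 0" using nz(2) by linarith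
  have "1 = (1 / M) * M" using M by simp
  also have "\<dots> \<le> of_int \<lceil>1 / M\<rceil> * M" using M by (intro mult_right_mono) auto
  also have "\<dots> = (\<Sum>y\<in>T. \<bar>of_int \<lceil>1 / M\<rceil> * g y\<bar>)"
    using M by (simp add: M_def abs_mult sum_distrib_left abs_of_pos)
  finally show ?thesis by blast
qed

lemma finite_Cp_STAP:
  assumes fin: "finite (topspace X)"
  shows "Cp_STAP X"
  unfolding Cp_STAP_def
proof (intro notI, elim exE conjE)
  fix f assume "inj f" and hyper: "Cp_hyper_converging X f"
  let ?T = "topspace X" and ?norm = "\<lambda>k n. \<Sum>y\<in>topspace X. \<bar>of_int k * f n y\<bar>"
  have Cp: "f n \<in> Cp X" for n using hyper by (simp add: Cp_hyper_converging_iff)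
  have nonzero: "\<exists>x\<in>?T. f n x \<noteq> 0" if "f n \<noteq> Cp_zero X" for n
    using that Cp[of n] by (auto simp: Cp_def Cp_zero_def extensional_def)
  have "\<forall>\<^sub>F n in sequentially. f n \<noteq> Cp_zero X"
    using inj_eventually_neq[OF \<open>inj f\<close>] .
  then have scalable: "\<forall>\<^sub>F n in sequentially. \<exists>k. ?norm k n \<ge> 1"
    by (rule eventually_mono) (use nonzero integer_multiple_norm_ge_1[OF fin] in blast)
  define m where "m n = (SOME k. ?norm k n \<ge> 1)" for n
  have big: "\<forall>\<^sub>F n in sequentially. ?norm (m n) n \<ge> 1"
    using scalable by (rule eventually_mono) (unfold m_def, erule someI_ex)
  (* But the norms of the rescaled functions tend to 0, being finite sums of
     pointwise limits. *)
  have "((\<lambda>n. ?norm (m n) n) \<longlongrightarrow> (\<Sum>y\<in>?T. 0)) sequentially"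
    using hyper by (intro tendsto_sum tendsto_rabs_zero) (simp add: Cp_hyper_converging_iff)
  then have "\<forall>\<^sub>F n in sequentially. ?norm (m n) n < 1"
    by (rule order_tendstoD) simp
  with big have "\<forall>\<^sub>F n in sequentially. False"
    by eventually_elim simp
  then show False by simp
qed

theorem theorem6p4:
  fixes X :: "'a topology"
  assumes "Tychonoff_space X"
  shows "Cp_STAP X \<longleftrightarrow> finite (topspace X)"
  using finite_Cp_STAP infinite_not_Cp_STAP[OF assms] by blast

end
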